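(* Let $n\ge 2$, $C>0$, let $x\in\mathcal{K}_{S+}$, and let $\tilde{x}=x+\eta$ where either $\eta$ has i.i.d. Laplace entries with mean $0$ and scale $b>0$, or $\eta\sim\mathcal{N}(0,\sigma^2I_n)$ with $\sigma>0$. Then for every pair $(i,j)$ with $x_i\le x_j$, $$\mathcal{B}(\pi_{S+})_i-\mathcal{B}(\pi_{S+})_j\le x_j-x_i.$$
   Context: Let $C>0$, $\mathcal{K}_S=\{v\in\mathbb{R}^n:\sum_i v_i=C\}$, $\mathcal{K}_{S+}=\{v\in\mathcal{K}_S:v\ge0\}$, and $\pi_{S+}(\tilde{x})=\arg\min_{v\in\mathcal{K}_{S+}}\|v-\tilde{x}\|_2$. The bias of a map $\pi:\mathbb{R}^n\to\mathbb{R}^n$ is $\mathcal{B}(\pi)=\mathbb{E}_{\tilde{x}}[\pi(\tilde{x})]-x$. *)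

theory Defs
  imports "HOL-Probability.Probability"
begin

definition K_S :: "real \<Rightarrow> ('n::finite \<Rightarrow> real) set" where
  "K_S C = {v. (\<Sum>i\<in>UNIV. v i) = C}"

definition K_Splus :: "real \<Rightarrow> ('n::finite \<Rightarrow> real) set" where
  "K_Splus C = {v \<in> K_S C. \<forall>i. 0 \<le> v i}"

definition l2dist :: "('n::finite \<Rightarrow> real) \<Rightarrow> ('n \<Rightarrow> real) \<Rightarrow> real" where
  "l2dist v w = sqrt (\<Sum>i\<in>UNIV. (v i - w i)^2)"

text \<open>Euclidean projection onto K_S+ (the arg min, unique since the set is closed, convex, nonempty).\<close>
definition proj_Splus :: "real \<Rightarrow> ('n::finite \<Rightarrow> real) \<Rightarrow> ('n \<Rightarrow> real)" where
  "proj_Splus C y = (THE v. v \<in> K_Splus C \<and> (\<forall>w\<in>K_Splus C. l2dist v y \<le> l2dist w y))"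

definition laplace_density :: "real \<Rightarrow> real \<Rightarrow> real" where
  "laplace_density b t = exp (- \<bar>t\<bar> / b) / (2 * b)"

definition laplace_noise :: "real \<Rightarrow> ('n::finite \<Rightarrow> real) measure" where
  "laplace_noise b = PiM UNIV (\<lambda>_. density lborel (laplace_density b))"

definition gaussian_noise :: "real \<Rightarrow> ('n::finite \<Rightarrow> real) measure" where
  "gaussian_noise \<sigma> = PiM UNIV (\<lambda>_. density lborel (normal_density 0 \<sigma>))"

definition bias :: "('n::finite \<Rightarrow> real) measure \<Rightarrow> (('n \<Rightarrow> real) \<Rightarrow> ('n \<Rightarrow> real))
    \<Rightarrow> ('n \<Rightarrow> real) \<Rightarrow> ('n \<Rightarrow> real)" where
  "bias M \<pi> x = (\<lambda>i. (\<integral>\<eta>. \<pi> (\<lambda>k. x k + \<eta> k) i \<partial>M) - x i)"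

end

theory Submission
  imports Defs "HOL-Analysis.Analysis"
begin

text \<open>Let \<open>\<tau>\<close> be the transposition of \<open>i\<close> and \<open>j\<close>. I.i.d. noise is invariant under
  \<open>\<eta> \<mapsto> \<eta> \<circ> \<tau>\<close> and the projection commutes with relabelling coordinates, so the expected
  \<open>i\<close>-th and \<open>j\<close>-th coordinates of \<open>\<pi>(x + \<eta>)\<close> are the expected \<open>j\<close>-th and \<open>i\<close>-th
  coordinates of \<open>\<pi>(x \<circ> \<tau> + \<eta>)\<close>. Now \<open>x \<circ> \<tau> + \<eta>\<close> arises from \<open>x + \<eta>\<close> by moving
  mass \<open>x\<^sub>j - x\<^sub>i \<ge> 0\<close> from coordinate \<open>j\<close> to coordinate \<open>i\<close>, and since the projection
  onto a convex set is a monotone operator this can only increase \<open>\<pi>\<^sub>i - \<pi>\<^sub>j\<close>.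
  Averaging the two expressions gives \<open>E \<pi>(x + \<eta>)\<^sub>i \<le> E \<pi>(x + \<eta>)\<^sub>j\<close>.\<close>

lemma prob_space_laplace_density:
  assumes b: "b > 0"
  shows "prob_space (density lborel (laplace_density b))"
proof (rule prob_spaceI)
  define e where "e = exponential_density (1/b)"
  have [measurable]: "e \<in> borel_measurable borel"
    unfolding e_def by simp
  have e_nonneg: "e t \<ge> 0" for t
    unfolding e_def exponential_density_def using b by auto
  have int_e: "(\<integral>\<^sup>+t. ennreal (e t) \<partial>lborel) = 1"
  proof -
    interpret prob_space "density lborel e"
      unfolding e_def using b by (intro prob_space_exponential_density) simp
    show ?thesis using emeasure_space_1 by (simp add: emeasure_density)
  qed
  have int_e_reflected: "(\<integral>\<^sup>+t. ennreal (e (-t)) \<partial>lborel) = 1"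
    using nn_integral_real_affine[of "\<lambda>t. ennreal (e t)" "-1" 0] int_e by simp
  have halves: "inverse 2 + inverse 2 = (1::ennreal)"
    using ennreal_plus[of "1/2" "1/2"] by (simp add: ennreal_half)
  have half: "ennreal (r / 2) = ennreal r * inverse 2" if "r \<ge> 0" for r :: real
    using that by (simp add: ennreal_divide_numeral[symmetric] divide_ennreal_def)
  have "(\<integral>\<^sup>+t. ennreal (laplace_density b t) \<partial>lborel)
      = (\<integral>\<^sup>+t. ennreal (e t) * inverse 2 + ennreal (e (-t)) * inverse 2 \<partial>lborel)"
  proof (intro nn_integral_cong_AE eventually_mono[OF AE_lborel_singleton[of 0]])
    fix t :: real assume "t \<noteq> 0"
    then have "laplace_density b t = e t / 2 + e (-t) / 2"
      unfolding e_def exponential_density_def laplace_density_def using b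
      by (cases "t < 0") (auto simp: field_simps)
    then show "ennreal (laplace_density b t) = ennreal (e t) * inverse 2 + ennreal (e (-t)) * inverse 2"
      using e_nonneg[of t] e_nonneg[of "-t"]
      by (simp add: half)
  qed
  also have "\<dots> = 1"
    by (subst nn_integral_add) (auto simp: nn_integral_multc int_e int_e_reflected halves)
  finally show "emeasure (density lborel (laplace_density b)) (space (density lborel (laplace_density b))) = 1"
    by (simp add: emeasure_density laplace_density_def)
qed

lemma distr_PiM_iid_permute:
  assumes "prob_space N" and "inj \<sigma>"
  shows "distr (\<Pi>\<^sub>M i\<in>UNIV. N) (\<Pi>\<^sub>M i\<in>UNIV. N) (\<lambda>\<eta>. \<eta> \<circ> \<sigma>) = (\<Pi>\<^sub>M i\<in>UNIV. N)"
  using distr_PiM_reindex[of UNIV "\<lambda>_. N" \<sigma> UNIV] assms by (simp add: restrict_UNIV o_def)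

lemma sets_PiM_iid_borel:
  assumes "sets N = sets (borel :: 'b::second_countable_topology measure)"
  shows "sets (\<Pi>\<^sub>M i\<in>(UNIV :: 'a::countable set). N) = sets (borel :: ('a \<Rightarrow> 'b) measure)"
proof -
  have "sets (\<Pi>\<^sub>M i\<in>(UNIV :: 'a set). N) = sets (\<Pi>\<^sub>M i\<in>(UNIV :: 'a set). (borel :: 'b measure))"
    using assms by (intro sets_PiM_cong) auto
  then show ?thesis
    using sets_PiM_equal_borel by simp
qed

text \<open>\<open>proj_Splus\<close> is studied through its copy on \<open>real^'n\<close>, where \<open>closest_point\<close> is available.\<close>

definition Splus_vec :: "real \<Rightarrow> (real ^ 'n::finite) set" where
  "Splus_vec C = vec_lambda ` K_Splus C"

lemma Splus_vec_eq: "Splus_vec C = {v. (\<Sum>i\<in>UNIV. v $ i) = C \<and> (\<forall>i. 0 \<le> v $ i)}"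
  unfolding Splus_vec_def K_Splus_def K_S_def
  by (auto simp: image_iff intro!: exI[of _ "vec_nth v" for v])

lemma closed_Splus_vec: "closed (Splus_vec C)"
  unfolding Splus_vec_eq
  by (intro closed_Collect_conj closed_Collect_eq closed_Collect_all closed_Collect_le continuous_intros)

lemma convex_Splus_vec: "convex (Splus_vec C)"
  unfolding Splus_vec_eq convex_def
  by (auto simp: sum.distrib sum_distrib_left[symmetric] distrib_right[symmetric])

lemma l2dist_eq_dist_vec: "l2dist v w = dist (vec_lambda v) (vec_lambda w)"
  unfolding l2dist_def dist_vec_def L2_set_def by (simp add: dist_real_def)

lemma vec_nth_vec_lambda [simp]: "vec_nth (vec_lambda f) = f"
  by (rule ext) simp

lemma proj_Splus_unique:
  assumes "p \<in> K_Splus C" "\<forall>w\<in>K_Splus C. l2dist p y \<le> l2dist w y"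
  shows "proj_Splus C y = p"
proof -
  let ?p = "closest_point (Splus_vec C) (vec_lambda y)"
  have closest: "vec_lambda q = ?p"
    if "q \<in> K_Splus C" "\<forall>w\<in>K_Splus C. l2dist q y \<le> l2dist w y" for q
    by (rule closest_point_unique[OF convex_Splus_vec closed_Splus_vec])
      (use that in \<open>auto simp: Splus_vec_def l2dist_eq_dist_vec dist_commute\<close>)
  have "(THE v. v \<in> K_Splus C \<and> (\<forall>w\<in>K_Splus C. l2dist v y \<le> l2dist w y)) = p"
    by (rule the_equality) (use assms closest in \<open>metis vec_nth_vec_lambda\<close>)+
  then show ?thesis
    unfolding proj_Splus_def .
qed

lemma Splus_vec_nonempty:
  assumes "0 \<le> C"
  shows "Splus_vec C \<noteq> {}"
proof -
  have "(\<chi> k. C / CARD('n)) \<in> (Splus_vec C :: (real ^ 'n::finite) set)"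
    using assms by (simp add: Splus_vec_eq)
  then show ?thesis by blast
qed

lemma proj_Splus_eq_closest_point:
  assumes "0 \<le> C"
  shows "proj_Splus C y = vec_nth (closest_point (Splus_vec C) (vec_lambda y))"
proof (rule proj_Splus_unique)
  note ne = Splus_vec_nonempty[OF assms]
  show "vec_nth (closest_point (Splus_vec C) (vec_lambda y)) \<in> K_Splus C"
    using closest_point_in_set[OF closed_Splus_vec ne, of "vec_lambda y"]
    by (auto simp: Splus_vec_def)
  show "\<forall>w\<in>K_Splus C. l2dist (vec_nth (closest_point (Splus_vec C) (vec_lambda y))) y \<le> l2dist w y"
    using closest_point_exists(2)[OF closed_Splus_vec ne, of "vec_lambda y"]
    by (auto simp: Splus_vec_def l2dist_eq_dist_vec dist_commute)
qed

lemma proj_Splus_in: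
  assumes "0 \<le> C"
  shows "proj_Splus C y \<in> K_Splus C"
  using closest_point_in_set[OF closed_Splus_vec Splus_vec_nonempty[OF assms], of "vec_lambda y"]
  by (auto simp: proj_Splus_eq_closest_point[OF assms] Splus_vec_def)

lemma proj_Splus_le_l2dist:
  assumes "0 \<le> C" and "w \<in> K_Splus C"
  shows "l2dist (proj_Splus C y) y \<le> l2dist w y"
  using closest_point_exists(2)[OF closed_Splus_vec Splus_vec_nonempty[OF assms(1)], of "vec_lambda y"] assms(2)
  by (auto simp: proj_Splus_eq_closest_point[OF assms(1)] Splus_vec_def l2dist_eq_dist_vec dist_commute)

lemma proj_Splus_bounds:
  assumes "0 \<le> C"
  shows "0 \<le> proj_Splus C y k" and "proj_Splus C y k \<le> C"
proof -
  have "(\<Sum>i\<in>UNIV. proj_Splus C y i) = C" and nonneg: "\<forall>i. 0 \<le> proj_Splus C y i"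
    using proj_Splus_in[OF assms, of y] by (auto simp: K_Splus_def K_S_def)
  moreover have "proj_Splus C y k \<le> (\<Sum>i\<in>UNIV. proj_Splus C y i)"
    using nonneg by (intro member_le_sum) auto
  ultimately show "0 \<le> proj_Splus C y k" "proj_Splus C y k \<le> C"
    by auto
qed

lemma proj_Splus_monotone:
  assumes "0 \<le> C"
  shows "0 \<le> (\<Sum>k\<in>UNIV. (w k - y k) * (proj_Splus C w k - proj_Splus C y k))"
proof -
  note ne = Splus_vec_nonempty[OF assms]
  let ?a = "vec_lambda w" and ?b = "vec_lambda y"
  let ?pa = "closest_point (Splus_vec C) ?a" and ?pb = "closest_point (Splus_vec C) ?b"
  have "inner (?a - ?pa) (?pb - ?pa) \<le> 0" "inner (?b - ?pb) (?pa - ?pb) \<le> 0"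
    by (rule closest_point_dot[OF convex_Splus_vec closed_Splus_vec closest_point_in_set[OF closed_Splus_vec ne]])+
  then have "inner (?pa - ?pb) (?pa - ?pb) \<le> inner (?a - ?b) (?pa - ?pb)"
    by (simp add: inner_diff_left inner_diff_right inner_commute algebra_simps)
  then have "0 \<le> inner (?a - ?b) (?pa - ?pb)"
    by (meson inner_ge_zero order_trans)
  then show ?thesis
    by (simp add: proj_Splus_eq_closest_point[OF assms] inner_vec_def)
qed

lemma K_Splus_permute:
  assumes "\<sigma> permutes UNIV"
  shows "v \<circ> \<sigma> \<in> K_Splus C \<longleftrightarrow> v \<in> K_Splus C"
proof -
  have "(\<forall>i. 0 \<le> v (\<sigma> i)) \<longleftrightarrow> (\<forall>i. 0 \<le> v i)"
    by (metis assms permutes_inverses(1))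
  then show ?thesis
    using sum.permute[OF assms, of v] by (simp add: K_Splus_def K_S_def)
qed

lemma l2dist_permute:
  assumes "\<sigma> permutes UNIV"
  shows "l2dist (v \<circ> \<sigma>) (w \<circ> \<sigma>) = l2dist v w"
  using sum.permute[OF assms, of "\<lambda>i. (v i - w i)^2"] by (simp add: l2dist_def o_def)

lemma proj_Splus_permute:
  fixes y :: "'n::finite \<Rightarrow> real"
  assumes "0 \<le> C" and \<sigma>: "\<sigma> permutes UNIV"
  shows "proj_Splus C (y \<circ> \<sigma>) = proj_Splus C y \<circ> \<sigma>"
proof (rule proj_Splus_unique)
  show "proj_Splus C y \<circ> \<sigma> \<in> K_Splus C"
    using K_Splus_permute[OF \<sigma>] proj_Splus_in[OF assms(1)] by blast
  show "\<forall>w\<in>K_Splus C. l2dist (proj_Splus C y \<circ> \<sigma>) (y \<circ> \<sigma>) \<le> l2dist w (y \<circ> \<sigma>)"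
  proof
    fix w :: "'n \<Rightarrow> real" assume "w \<in> K_Splus C"
    then have w': "w \<circ> inv \<sigma> \<in> K_Splus C"
      using K_Splus_permute[OF permutes_inv[OF \<sigma>]] by blast
    have "l2dist (proj_Splus C y \<circ> \<sigma>) (y \<circ> \<sigma>) = l2dist (proj_Splus C y) y"
      by (rule l2dist_permute[OF \<sigma>])
    also have "\<dots> \<le> l2dist (w \<circ> inv \<sigma>) y"
      by (rule proj_Splus_le_l2dist[OF assms(1) w'])
    also have "\<dots> = l2dist (w \<circ> inv \<sigma> \<circ> \<sigma>) (y \<circ> \<sigma>)"
      by (rule l2dist_permute[OF \<sigma>, symmetric])
    also have "w \<circ> inv \<sigma> \<circ> \<sigma> = w"
      by (simp add: o_assoc[symmetric] permutes_inv_o(2)[OF \<sigma>])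
    finally show "l2dist (proj_Splus C y \<circ> \<sigma>) (y \<circ> \<sigma>) \<le> l2dist w (y \<circ> \<sigma>)" .
  qed
qed

lemma proj_Splus_transfer_mass:
  fixes y :: "'n::finite \<Rightarrow> real"
  assumes "0 \<le> C" and "0 \<le> t" and "i \<noteq> j"
  defines "w \<equiv> y(i := y i + t, j := y j - t)"
  shows "proj_Splus C y i - proj_Splus C y j \<le> proj_Splus C w i - proj_Splus C w j"
proof -
  define d where "d k = proj_Splus C w k - proj_Splus C y k" for k
  have "(w k - y k) * d k = (if k = i then t * d i else 0) - (if k = j then t * d j else 0)" for k
    using assms(3) by (simp add: w_def)
  then have "(\<Sum>k\<in>UNIV. (w k - y k) * d k) = t * (d i - d j)"
    by (simp add: sum_subtractf right_diff_distrib)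
  then have "0 \<le> t * (d i - d j)"
    using proj_Splus_monotone[OF assms(1), of w y] by (simp add: d_def)
  moreover have "d i = d j" if "t = 0"
    using that by (simp add: d_def w_def)
  ultimately have "0 \<le> d i - d j"
    using assms(2) by (cases "t = 0") (auto simp: zero_le_mult_iff)
  then show ?thesis
    by (simp add: d_def)
qed

lemma continuous_on_proj_Splus:
  assumes "0 \<le> C"
  shows "continuous_on UNIV (proj_Splus C :: ('n::finite \<Rightarrow> real) \<Rightarrow> 'n \<Rightarrow> real)"
proof (rule continuous_on_coordinatewise_then_product)
  fix k :: 'n
  have "continuous_on UNIV (\<lambda>y::'n \<Rightarrow> real. closest_point (Splus_vec C) (\<chi> i. y i))"
    by (rule continuous_on_compose2[OF continuous_on_closest_point[OF convex_Splus_vec closed_Splus_vec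
          Splus_vec_nonempty[OF assms]]]) (auto intro: continuous_intros)
  then show "continuous_on UNIV (\<lambda>y. proj_Splus C y k)"
    by (simp add: proj_Splus_eq_closest_point[OF assms] continuous_on_component)
qed

lemma borel_measurable_proj_Splus_shift:
  fixes x :: "'n::finite \<Rightarrow> real"
  assumes "0 \<le> C"
  shows "(\<lambda>\<eta>. proj_Splus C (\<lambda>k. x k + \<eta> k) l) \<in> borel_measurable borel"
proof (rule borel_measurable_continuous_onI, rule continuous_on_product_then_coordinatewise)
  have "continuous_on UNIV (\<lambda>\<eta>::'n \<Rightarrow> real. \<lambda>k. x k + \<eta> k)"
    by (intro continuous_on_coordinatewise_then_product continuous_on_add continuous_on_const
        continuous_on_product_coordinates)
  then show "continuous_on UNIV (\<lambda>\<eta>. proj_Splus C (\<lambda>k. x k + \<eta> k))"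
    by (rule continuous_on_compose2[OF continuous_on_proj_Splus[OF assms]]) auto
qed

lemma integrable_proj_Splus_shift:
  fixes x :: "'n::finite \<Rightarrow> real"
  assumes "prob_space M" "sets M = sets borel" "0 \<le> C"
  shows "integrable M (\<lambda>\<eta>. proj_Splus C (\<lambda>k. x k + \<eta> k) l)"
proof -
  interpret prob_space M by (rule assms(1))
  show ?thesis
  proof (rule integrable_const_bound)
    have "\<bar>proj_Splus C y l\<bar> \<le> C" for y :: "'n \<Rightarrow> real"
      using proj_Splus_bounds[OF assms(3), of y l] by simp
    then show "AE \<eta> in M. norm (proj_Splus C (\<lambda>k. x k + \<eta> k) l) \<le> C"
      by simp
    show "(\<lambda>\<eta>. proj_Splus C (\<lambda>k. x k + \<eta> k) l) \<in> borel_measurable M"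
      using borel_measurable_proj_Splus_shift[OF assms(3)] measurable_cong_sets[OF assms(2) refl] by blast
  qed
qed

lemma integral_proj_Splus_le_if_swap_invariant:
  fixes x :: "'n::finite \<Rightarrow> real" and M :: "('n \<Rightarrow> real) measure"
  assumes M: "prob_space M" "sets M = sets borel"
    and swap: "distr M M (\<lambda>\<eta>. \<eta> \<circ> Transposition.transpose i j) = M"
    and C: "0 \<le> C" and xij: "x i \<le> x j"
  shows "(\<integral>\<eta>. proj_Splus C (\<lambda>k. x k + \<eta> k) i \<partial>M) \<le> (\<integral>\<eta>. proj_Splus C (\<lambda>k. x k + \<eta> k) j \<partial>M)"
proof (cases "i = j")
  case False
  define \<tau> where "\<tau> = Transposition.transpose i j"
  have \<tau>: "\<tau> permutes UNIV"
    unfolding \<tau>_def by (rule permutes_swap_id) auto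
  define F where "F l \<eta> = proj_Splus C (\<lambda>k. x k + \<eta> k) l" for l \<eta>
  define G where "G l \<eta> = proj_Splus C (\<lambda>k. x (\<tau> k) + \<eta> k) l" for l \<eta>
  have F_meas: "F l \<in> borel_measurable M" for l
    using borel_measurable_proj_Splus_shift[OF C] measurable_cong_sets[OF M(2) refl]
    unfolding F_def by blast
  have int: "integrable M (F l)" "integrable M (G l)" for l
    unfolding F_def G_def by (intro integrable_proj_Splus_shift M C)+
  have "(\<lambda>\<eta>::'n \<Rightarrow> real. \<eta> \<circ> \<tau>) \<in> borel_measurable borel"
    by (intro borel_measurable_continuous_onI continuous_on_coordinatewise_then_product)
      (simp add: o_def)
  then have swap_meas: "(\<lambda>\<eta>. \<eta> \<circ> \<tau>) \<in> measurable M M"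
    using measurable_cong_sets[OF M(2) M(2)] by blast
  have "(\<integral>\<eta>. F l \<eta> \<partial>M) = (\<integral>\<eta>. G (\<tau> l) \<eta> \<partial>M)" for l
  proof -
    have "F l (\<eta> \<circ> \<tau>) = G (\<tau> l) \<eta>" for \<eta>
      using proj_Splus_permute[OF C \<tau>, of "\<lambda>k. x (\<tau> k) + \<eta> k"]
      by (simp add: F_def G_def o_def permutes_swap_id \<tau>_def)
    then show ?thesis
      using integral_distr[OF swap_meas F_meas, of l] swap unfolding \<tau>_def by simp
  qed
  then have F_eq_G: "(\<integral>\<eta>. F i \<eta> \<partial>M) = (\<integral>\<eta>. G j \<eta> \<partial>M)" "(\<integral>\<eta>. F j \<eta> \<partial>M) = (\<integral>\<eta>. G i \<eta> \<partial>M)"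
    by (simp_all add: \<tau>_def)
  have "F i \<eta> - F j \<eta> \<le> G i \<eta> - G j \<eta>" for \<eta>
  proof -
    let ?y = "\<lambda>k. x k + \<eta> k"
    have "(\<lambda>k. x (\<tau> k) + \<eta> k) = ?y(i := ?y i + (x j - x i), j := ?y j - (x j - x i))"
      using False by (auto simp: \<tau>_def transpose_def)
    then show ?thesis
      using proj_Splus_transfer_mass[OF C _ False, of "x j - x i" ?y] xij
      by (simp add: F_def G_def)
  qed
  then have "(\<integral>\<eta>. F i \<eta> \<partial>M) - (\<integral>\<eta>. F j \<eta> \<partial>M) \<le> (\<integral>\<eta>. G i \<eta> \<partial>M) - (\<integral>\<eta>. G j \<eta> \<partial>M)"
    using integral_mono[of M "\<lambda>\<eta>. F i \<eta> - F j \<eta>" "\<lambda>\<eta>. G i \<eta> - G j \<eta>"] int by simp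
  then show ?thesis
    using F_eq_G by (simp add: F_def)
qed simp

theorem lemma4:
  fixes C :: real and x :: "'n::finite \<Rightarrow> real" and M :: "('n \<Rightarrow> real) measure"
    and i j :: 'n
  assumes "CARD('n) \<ge> 2"
    and "C > 0"
    and "x \<in> K_Splus C"
    and "(\<exists>b>0. M = laplace_noise b) \<or> (\<exists>\<sigma>>0. M = gaussian_noise \<sigma>)"
    and "x i \<le> x j"
  shows "bias M (proj_Splus C) x i - bias M (proj_Splus C) x j \<le> x j - x i"
proof -
  obtain N :: "real measure" where N: "prob_space N" "sets N = sets borel" and M: "M = (\<Pi>\<^sub>M k\<in>UNIV. N)"
  proof -
    consider b where "b > 0" "M = laplace_noise b" | \<sigma> where "\<sigma> > 0" "M = gaussian_noise \<sigma>"
      using assms(4) by blast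
    then show ?thesis
    proof cases
      case 1
      then show ?thesis
        by (intro that[of "density lborel (laplace_density b)"])
          (simp_all add: prob_space_laplace_density laplace_noise_def)
    next
      case 2
      then show ?thesis
        by (intro that[of "density lborel (normal_density 0 \<sigma>)"])
          (simp_all add: prob_space_normal_density gaussian_noise_def)
    qed
  qed
  have "prob_space M"
    unfolding M by (intro prob_space_PiM N(1))
  moreover have "sets M = sets borel"
    unfolding M by (rule sets_PiM_iid_borel[OF N(2)])
  moreover have "distr M M (\<lambda>\<eta>. \<eta> \<circ> Transposition.transpose i j) = M"
    unfolding M by (rule distr_PiM_iid_permute[OF N(1)]) simp
  ultimately have "(\<integral>\<eta>. proj_Splus C (\<lambda>k. x k + \<eta> k) i \<partial>M) \<le> (\<integral>\<eta>. proj_Splus C (\<lambda>k. x k + \<eta> k) j \<partial>M)"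
    using assms(2,5) by (intro integral_proj_Splus_le_if_swap_invariant) auto
  then show ?thesis
    unfolding bias_def by simp
qed

end
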